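(* Let $\mathcal L=(\Sigma,X)$ be a language and $\Lambda$ a fuzzy theory in $\mathcal L$. Let $\sim_\Lambda$ be the relation on $\mathrm{Terms}(\mathcal L)$ given by $t\sim_\Lambda s$ iff $\vdash_\Lambda t\equiv s$; let $\mathrm{Terms}_\Lambda=\mathrm{Terms}(\mathcal L)/\sim_\Lambda$, $\mu_\Lambda([t])=\sup\{l\in H\mid\ \vdash_\Lambda\mathsf E_l(t)\}$, $c^{\mathcal T_\Lambda}=[c]$ for $c\in C$, and $f^{\mathcal T_\Lambda}([t_1],\dots,[t_n])=[f(t_1,\dots,t_n)]$ for $f\in O$, $n=\mathrm{ar}(f)$; let $\iota_{can}:X\to\mathrm{Terms}_\Lambda$, $x\mapsto[x]$. Then $\sim_\Lambda$ is an equivalence relation, $\mathcal T_\Lambda=((\mathrm{Terms}_\Lambda,\mu_\Lambda),\Sigma^{\mathcal T_\Lambda})$ is a well-defined $\Sigma$-algebra, and: (1) for every formula $\phi$, the following are equivalent: (a) $\mathcal T_\Lambda\vDash\phi$; (b) $\mathcal T_\Lambda\vDash_{\iota_{can}}\phi$; (c) $\vdash_\Lambda\phi$; (2) for every assignment $\iota:X\to\mathrm{Terms}_\Lambda$, every section $\sigma$ of the quotient map $\mathrm{Terms}(\mathcal L)\to\mathrm{Terms}_\Lambda$ and every formula $\phi$: $\mathcal T_\Lambda\vDash_\iota\phi$ iff $\vdash_\Lambda\phi[\sigma\circ\iota]$; (3) $\mathcal T_\Lambda$ is a model of $\Lambda$.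
   Context: $H$ is a frame with bottom $\bot$. An $H$-fuzzy set is a pair $(A,\mu_A)$ of a set $A$ and a function $\mu_A:A\to H$; an arrow $f:(A,\mu_A)\to(B,\mu_B)$ is a function with $\mu_A(x)\le\mu_B(f(x))$; they form $\mathbf{Fuz}_H$. For $n\ge1$, $(A,\mu_A)^n=(A^n,\mu)$ with $\mu(a_1,\dots,a_n)=\bigwedge_i\mu_A(a_i)$. A signature $\Sigma=(O,\mathrm{ar},C)$ consists of a set $O$ of operation symbols with arity $\mathrm{ar}:O\to\{1,2,3,\dots\}$ and a set $C$ of constant symbols. A language is a pair $\mathcal L=(\Sigma,X)$ with $X$ a set of variables. $\mathrm{Terms}(\mathcal L)$ is the smallest set containing $X\sqcup C$ and containing $f(t_1,\dots,t_{\mathrm{ar}(f)})$ whenever $f\in O$ and all $t_i\in\mathrm{Terms}(\mathcal L)$. A formula is either an equation $s\equiv t$ ($s,t$ terms) or a membership proposition $\mathsf E_l(t)$ with $l\in H$ and $t$ a term. A sequent $\Gamma\vdash\psi$ is a pair of a (possibly infinite) set $\Gamma$ of formulas and a formula $\psi$; $\vdash\psi$ means $\emptyset\vdash\psi$. A fuzzy theory in $\mathcal L$ is a set of sequents. For $\sigma:X\to\mathrm{Terms}(\mathcal L)$, $t[\sigma]$ is simultaneous substitution, extended to formulas by $(s\equiv t)[\sigma]=(s[\sigma]\equiv t[\sigma])$, $\mathsf E_l(t)[\sigma]=\mathsf E_l(t[\sigma])$, and to sets of formulas elementwise. The rules of the fuzzy sequent calculus are (for all sets of formulas $\Gamma,\Delta,\Phi$,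 formulas $\phi,\psi$, terms, $l,l'\in H$): (A) $\Gamma\vdash\phi$ if $\phi\in\Gamma$; (Weak) from $\Gamma\vdash\phi$ infer $\Gamma\cup\Delta\vdash\phi$; (Cut) from $\Gamma\vdash\phi$ for all $\phi\in\Phi$ and $\Phi\vdash\psi$ infer $\Gamma\vdash\psi$; (Refl) $\Gamma\vdash s\equiv s$; (Sym) from $\Gamma\vdash s\equiv t$ infer $\Gamma\vdash t\equiv s$; (Trans) from $\Gamma\vdash s\equiv t$ and $\Gamma\vdash t\equiv u$ infer $\Gamma\vdash s\equiv u$; (Sub) from $\Gamma\vdash\psi$ infer $\Gamma[\sigma]\vdash\psi[\sigma]$ for any $\sigma:X\to\mathrm{Terms}(\mathcal L)$; (Cong) for $f\in O$ with $n=\mathrm{ar}(f)$, from $\Gamma\vdash t_i\equiv s_i$ ($i=1,\dots,n$) infer $\Gamma\vdash f(t_1,\dots,t_n)\equiv f(s_1,\dots,s_n)$; (Inf) $\Gamma\vdash\mathsf E_\bot(t)$; (Mon) from $\Gamma\vdash\mathsf E_l(t)$ infer $\Gamma\vdash\mathsf E_{l\wedge l'}(t)$; (Exp) for $f\in O$ with $n=\mathrm{ar}(f)$, from $\Gamma\vdash\mathsf E_{l_i}(t_i)$ ($i=1,\dots,n$) infer $\Gamma\vdash\mathsf E_{l_1\wedge\dots\wedge l_n}(f(t_1,\dots,t_n))$; (Sup) for $S\subseteq H$, from $\Gamma\vdash\mathsf E_l(t)$ for all $l\in S$ infer $\Gamma\vdash\mathsf E_{\sup S}(t)$; (Fun)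 from $\Gamma\vdash t\equiv s$ and $\Gamma\vdash\mathsf E_l(t)$ infer $\Gamma\vdash\mathsf E_l(s)$. The deductive closure $\Lambda^{\vdash}$ of a theory $\Lambda$ is the smallest set of sequents containing $\Lambda$ and closed under all these rules; $\vdash_\Lambda\phi$ means $(\emptyset\vdash\phi)\in\Lambda^{\vdash}$. A $\Sigma$-algebra $\mathcal A=((A,\mu_A),\Sigma^{\mathcal A})$ is an $H$-fuzzy set $(A,\mu_A)$ together with, for each $f\in O$, an arrow $f^{\mathcal A}:(A,\mu_A)^{\mathrm{ar}(f)}\to(A,\mu_A)$ of $\mathbf{Fuz}_H$ and, for each $c\in C$, an element $c^{\mathcal A}\in A$. An assignment is a function $\iota:X\to A$; evaluation: $x^{\mathcal A,\iota}=\iota(x)$, $c^{\mathcal A,\iota}=c^{\mathcal A}$, $f(t_1,\dots,t_n)^{\mathcal A,\iota}=f^{\mathcal A}(t_1^{\mathcal A,\iota},\dots,t_n^{\mathcal A,\iota})$. $\mathcal A\vDash_\iota s\equiv t$ iff $s^{\mathcal A,\iota}=t^{\mathcal A,\iota}$; $\mathcal A\vDash_\iota\mathsf E_l(t)$ iff $l\le\mu_A(t^{\mathcal A,\iota})$; $\mathcal A\vDash\phi$ iff $\mathcal A\vDash_\iota\phi$ for all assignments $\iota$. $\mathcal A$ satisfies $\Gamma\vdash\psi$ if for every assignment $\iota$ with $\mathcal A\vDash_\iota\phi$ for all $\phi\in\Gamma$ one has $\mathcal A\vDash_\iota\psi$. $\mathcal A$ is a model of a theory $\Lambda$ if it satisfies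 every sequent of $\Lambda$. *)

theory Defs
  imports Main
begin

definition frame_law :: "'h::complete_lattice itself \<Rightarrow> bool" where
  "frame_law _ \<longleftrightarrow> (\<forall>(a::'h) S. inf a (Sup S) = Sup ((\<lambda>s. inf a s) ` S))"

text \<open>A signature is (Ops, ar, Cs); a language adds a set Xs of variables.
Raw syntax trees; the well-formed ones are carved out by term_set.\<close>
datatype ('v, 'o, 'c) trm = Var 'v | Cst 'c | App 'o "('v, 'o, 'c) trm list"

inductive_set term_set :: "'o set \<Rightarrow> ('o \<Rightarrow> nat) \<Rightarrow> 'c set \<Rightarrow> 'v set \<Rightarrow> ('v, 'o, 'c) trm set"
  for Ops ar Cs Xs where
  var: "x \<in> Xs \<Longrightarrow> Var x \<in> term_set Ops ar Cs Xs"
| cst: "c \<in> Cs \<Longrightarrow> Cst c \<in> term_set Ops ar Cs Xs"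
| app: "f \<in> Ops \<Longrightarrow> length ts = ar f \<Longrightarrow> (\<forall>t\<in>set ts. t \<in> term_set Ops ar Cs Xs)
        \<Longrightarrow> App f ts \<in> term_set Ops ar Cs Xs"

datatype ('v, 'o, 'c, 'h) fml = Eqn "('v, 'o, 'c) trm" "('v, 'o, 'c) trm" | Mem 'h "('v, 'o, 'c) trm"

definition fml_set :: "'o set \<Rightarrow> ('o \<Rightarrow> nat) \<Rightarrow> 'c set \<Rightarrow> 'v set \<Rightarrow> ('v, 'o, 'c, 'h) fml set" where
  "fml_set Ops ar Cs Xs =
     {Eqn s t | s t. s \<in> term_set Ops ar Cs Xs \<and> t \<in> term_set Ops ar Cs Xs}
     \<union> {Mem l t | l t. t \<in> term_set Ops ar Cs Xs}"

primrec tsubst :: "('v \<Rightarrow> ('v, 'o, 'c) trm) \<Rightarrow> ('v, 'o, 'c) trm \<Rightarrow> ('v, 'o, 'c) trm" where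
  "tsubst \<sigma> (Var x) = \<sigma> x"
| "tsubst \<sigma> (Cst c) = Cst c"
| "tsubst \<sigma> (App f ts) = App f (map (tsubst \<sigma>) ts)"

primrec fsubst :: "('v \<Rightarrow> ('v, 'o, 'c) trm) \<Rightarrow> ('v, 'o, 'c, 'h) fml \<Rightarrow> ('v, 'o, 'c, 'h) fml" where
  "fsubst \<sigma> (Eqn s t) = Eqn (tsubst \<sigma> s) (tsubst \<sigma> t)"
| "fsubst \<sigma> (Mem l t) = Mem l (tsubst \<sigma> t)"

type_synonym ('v, 'o, 'c, 'h) sequent = "('v, 'o, 'c, 'h) fml set \<times> ('v, 'o, 'c, 'h) fml"

definition fuzzy_theory ::
  "'o set \<Rightarrow> ('o \<Rightarrow> nat) \<Rightarrow> 'c set \<Rightarrow> 'v set \<Rightarrow> ('v, 'o, 'c, 'h) sequent set \<Rightarrow> bool" where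
  "fuzzy_theory Ops ar Cs Xs \<Lambda> \<longleftrightarrow>
     (\<forall>(\<Gamma>, \<psi>)\<in>\<Lambda>. \<Gamma> \<subseteq> fml_set Ops ar Cs Xs \<and> \<psi> \<in> fml_set Ops ar Cs Xs)"

inductive_set deriv ::
  "'o set \<Rightarrow> ('o \<Rightarrow> nat) \<Rightarrow> 'c set \<Rightarrow> 'v set \<Rightarrow> ('v, 'o, 'c, 'h::complete_lattice) sequent set
   \<Rightarrow> ('v, 'o, 'c, 'h) sequent set"
  for Ops ar Cs Xs \<Lambda> where
  Thy: "s \<in> \<Lambda> \<Longrightarrow> s \<in> deriv Ops ar Cs Xs \<Lambda>"
| A: "\<Gamma> \<subseteq> fml_set Ops ar Cs Xs \<Longrightarrow> \<phi> \<in> \<Gamma> \<Longrightarrow> (\<Gamma>, \<phi>) \<in> deriv Ops ar Cs Xs \<Lambda>"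
| Weak: "(\<Gamma>, \<phi>) \<in> deriv Ops ar Cs Xs \<Lambda> \<Longrightarrow> \<Delta> \<subseteq> fml_set Ops ar Cs Xs
        \<Longrightarrow> (\<Gamma> \<union> \<Delta>, \<phi>) \<in> deriv Ops ar Cs Xs \<Lambda>"
| Cut: "\<Gamma> \<subseteq> fml_set Ops ar Cs Xs \<Longrightarrow> (\<forall>\<phi>\<in>\<Phi>. (\<Gamma>, \<phi>) \<in> deriv Ops ar Cs Xs \<Lambda>)
        \<Longrightarrow> (\<Phi>, \<psi>) \<in> deriv Ops ar Cs Xs \<Lambda> \<Longrightarrow> (\<Gamma>, \<psi>) \<in> deriv Ops ar Cs Xs \<Lambda>"
| Refl: "\<Gamma> \<subseteq> fml_set Ops ar Cs Xs \<Longrightarrow> s \<in> term_set Ops ar Cs Xs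
        \<Longrightarrow> (\<Gamma>, Eqn s s) \<in> deriv Ops ar Cs Xs \<Lambda>"
| Sym: "(\<Gamma>, Eqn s t) \<in> deriv Ops ar Cs Xs \<Lambda> \<Longrightarrow> (\<Gamma>, Eqn t s) \<in> deriv Ops ar Cs Xs \<Lambda>"
| Trans: "(\<Gamma>, Eqn s t) \<in> deriv Ops ar Cs Xs \<Lambda> \<Longrightarrow> (\<Gamma>, Eqn t u) \<in> deriv Ops ar Cs Xs \<Lambda>
        \<Longrightarrow> (\<Gamma>, Eqn s u) \<in> deriv Ops ar Cs Xs \<Lambda>"
| Sub: "(\<Gamma>, \<psi>) \<in> deriv Ops ar Cs Xs \<Lambda> \<Longrightarrow> (\<forall>x\<in>Xs. \<sigma> x \<in> term_set Ops ar Cs Xs)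
        \<Longrightarrow> (fsubst \<sigma> ` \<Gamma>, fsubst \<sigma> \<psi>) \<in> deriv Ops ar Cs Xs \<Lambda>"
| Cong: "f \<in> Ops \<Longrightarrow> length ts = ar f \<Longrightarrow> length ss = ar f
        \<Longrightarrow> (\<forall>i<ar f. (\<Gamma>, Eqn (ts ! i) (ss ! i)) \<in> deriv Ops ar Cs Xs \<Lambda>)
        \<Longrightarrow> (\<Gamma>, Eqn (App f ts) (App f ss)) \<in> deriv Ops ar Cs Xs \<Lambda>"
| Inf: "\<Gamma> \<subseteq> fml_set Ops ar Cs Xs \<Longrightarrow> t \<in> term_set Ops ar Cs Xs
        \<Longrightarrow> (\<Gamma>, Mem bot t) \<in> deriv Ops ar Cs Xs \<Lambda>"
| Mon: "(\<Gamma>, Mem l t) \<in> deriv Ops ar Cs Xs \<Lambda> \<Longrightarrow> (\<Gamma>, Mem (inf l l') t) \<in> deriv Ops ar Cs Xs \<Lambda>"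
| Exp: "f \<in> Ops \<Longrightarrow> length ts = ar f \<Longrightarrow> length ls = ar f
        \<Longrightarrow> (\<forall>i<ar f. (\<Gamma>, Mem (ls ! i) (ts ! i)) \<in> deriv Ops ar Cs Xs \<Lambda>)
        \<Longrightarrow> (\<Gamma>, Mem (Inf (set ls)) (App f ts)) \<in> deriv Ops ar Cs Xs \<Lambda>"
| Sup: "\<Gamma> \<subseteq> fml_set Ops ar Cs Xs \<Longrightarrow> t \<in> term_set Ops ar Cs Xs
        \<Longrightarrow> (\<forall>l\<in>S. (\<Gamma>, Mem l t) \<in> deriv Ops ar Cs Xs \<Lambda>)
        \<Longrightarrow> (\<Gamma>, Mem (Sup S) t) \<in> deriv Ops ar Cs Xs \<Lambda>"
| Fun: "(\<Gamma>, Eqn t s) \<in> deriv Ops ar Cs Xs \<Lambda> \<Longrightarrow> (\<Gamma>, Mem l t) \<in> deriv Ops ar Cs Xs \<Lambda>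
        \<Longrightarrow> (\<Gamma>, Mem l s) \<in> deriv Ops ar Cs Xs \<Lambda>"

definition provable ::
  "'o set \<Rightarrow> ('o \<Rightarrow> nat) \<Rightarrow> 'c set \<Rightarrow> 'v set \<Rightarrow> ('v, 'o, 'c, 'h::complete_lattice) sequent set
   \<Rightarrow> ('v, 'o, 'c, 'h) fml \<Rightarrow> bool" where
  "provable Ops ar Cs Xs \<Lambda> \<phi> \<longleftrightarrow> ({}, \<phi>) \<in> deriv Ops ar Cs Xs \<Lambda>"

record ('a, 'o, 'c, 'h) salg =
  carrier :: "'a set"
  mu :: "'a \<Rightarrow> 'h"
  ops :: "'o \<Rightarrow> 'a list \<Rightarrow> 'a"
  csts :: "'c \<Rightarrow> 'a"

text \<open>Each operation is an arrow (A,mu)^n \<rightarrow> (A,mu) of Fuz_H: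
it maps A^n into A and mu(a_1) \<and> ... \<and> mu(a_n) \<le> mu(f(a_1,...,a_n)).\<close>
definition is_salg :: "'o set \<Rightarrow> ('o \<Rightarrow> nat) \<Rightarrow> 'c set \<Rightarrow> ('a, 'o, 'c, 'h::complete_lattice) salg \<Rightarrow> bool" where
  "is_salg Ops ar Cs \<A> \<longleftrightarrow>
     (\<forall>f\<in>Ops. \<forall>as. length as = ar f \<and> set as \<subseteq> carrier \<A> \<longrightarrow>
         ops \<A> f as \<in> carrier \<A> \<and> Inf (mu \<A> ` set as) \<le> mu \<A> (ops \<A> f as))
     \<and> (\<forall>c\<in>Cs. csts \<A> c \<in> carrier \<A>)"

primrec eval :: "('a, 'o, 'c, 'h) salg \<Rightarrow> ('v \<Rightarrow> 'a) \<Rightarrow> ('v, 'o, 'c) trm \<Rightarrow> 'a" where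
  "eval \<A> \<iota> (Var x) = \<iota> x"
| "eval \<A> \<iota> (Cst c) = csts \<A> c"
| "eval \<A> \<iota> (App f ts) = ops \<A> f (map (eval \<A> \<iota>) ts)"

primrec sat_at :: "('a, 'o, 'c, 'h::complete_lattice) salg \<Rightarrow> ('v \<Rightarrow> 'a) \<Rightarrow> ('v, 'o, 'c, 'h) fml \<Rightarrow> bool" where
  "sat_at \<A> \<iota> (Eqn s t) \<longleftrightarrow> eval \<A> \<iota> s = eval \<A> \<iota> t"
| "sat_at \<A> \<iota> (Mem l t) \<longleftrightarrow> l \<le> mu \<A> (eval \<A> \<iota> t)"

text \<open>Assignments are functions X \<rightarrow> A; values outside Xs are irrelevant.\<close>
definition assignment :: "'v set \<Rightarrow> ('a, 'o, 'c, 'h) salg \<Rightarrow> ('v \<Rightarrow> 'a) \<Rightarrow> bool" where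
  "assignment Xs \<A> \<iota> \<longleftrightarrow> (\<forall>x\<in>Xs. \<iota> x \<in> carrier \<A>)"

definition valid :: "'v set \<Rightarrow> ('a, 'o, 'c, 'h::complete_lattice) salg \<Rightarrow> ('v, 'o, 'c, 'h) fml \<Rightarrow> bool" where
  "valid Xs \<A> \<phi> \<longleftrightarrow> (\<forall>\<iota>. assignment Xs \<A> \<iota> \<longrightarrow> sat_at \<A> \<iota> \<phi>)"

definition sat_seq :: "'v set \<Rightarrow> ('a, 'o, 'c, 'h::complete_lattice) salg \<Rightarrow> ('v, 'o, 'c, 'h) sequent \<Rightarrow> bool" where
  "sat_seq Xs \<A> s \<longleftrightarrow>
     (\<forall>\<iota>. assignment Xs \<A> \<iota> \<longrightarrow> (\<forall>\<phi>\<in>fst s. sat_at \<A> \<iota> \<phi>) \<longrightarrow> sat_at \<A> \<iota> (snd s))"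

definition is_model :: "'v set \<Rightarrow> ('a, 'o, 'c, 'h::complete_lattice) salg \<Rightarrow> ('v, 'o, 'c, 'h) sequent set \<Rightarrow> bool" where
  "is_model Xs \<A> \<Lambda> \<longleftrightarrow> (\<forall>s\<in>\<Lambda>. sat_seq Xs \<A> s)"

definition prov_eq ::
  "'o set \<Rightarrow> ('o \<Rightarrow> nat) \<Rightarrow> 'c set \<Rightarrow> 'v set \<Rightarrow> ('v, 'o, 'c, 'h::complete_lattice) sequent set
   \<Rightarrow> (('v, 'o, 'c) trm \<times> ('v, 'o, 'c) trm) set" where
  "prov_eq Ops ar Cs Xs \<Lambda> =
     {(t, s). t \<in> term_set Ops ar Cs Xs \<and> s \<in> term_set Ops ar Cs Xs
              \<and> provable Ops ar Cs Xs \<Lambda> (Eqn t s :: ('v, 'o, 'c, 'h) fml)}"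

text \<open>Operations are defined on classes through (chosen) representatives, as in the paper;
well-definedness (independence of representatives) is part of the theorem.\<close>
definition term_alg ::
  "'o set \<Rightarrow> ('o \<Rightarrow> nat) \<Rightarrow> 'c set \<Rightarrow> 'v set \<Rightarrow> ('v, 'o, 'c, 'h::complete_lattice) sequent set
   \<Rightarrow> (('v, 'o, 'c) trm set, 'o, 'c, 'h) salg" where
  "term_alg Ops ar Cs Xs \<Lambda> =
     (let R = prov_eq Ops ar Cs Xs \<Lambda> in
      \<lparr> carrier = term_set Ops ar Cs Xs // R,
        mu = (\<lambda>A. Sup {l. provable Ops ar Cs Xs \<Lambda> (Mem l (SOME t. t \<in> A))}),
        ops = (\<lambda>f As. R `` {App f (map (\<lambda>A. SOME t. t \<in> A) As)}),
        csts = (\<lambda>c. R `` {Cst c}) \<rparr>)"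

definition iota_can ::
  "'o set \<Rightarrow> ('o \<Rightarrow> nat) \<Rightarrow> 'c set \<Rightarrow> 'v set \<Rightarrow> ('v, 'o, 'c, 'h::complete_lattice) sequent set
   \<Rightarrow> 'v \<Rightarrow> ('v, 'o, 'c) trm set" where
  "iota_can Ops ar Cs Xs \<Lambda> = (\<lambda>x. prov_eq Ops ar Cs Xs \<Lambda> `` {Var x})"

end

theory Submission
  imports Defs
begin

text \<open>The classes of provably equal terms form a \<open>\<Sigma>\<close>-algebra in which a term denotes its own class
  and the membership degree of a class is the largest provable one; the rules Sup and Mon make this
  supremum itself provable, and Cong and Exp make the operations well defined and arrows of fuzzy sets.
  By induction on terms, evaluating under an assignment whose values are represented by terms
  \<open>\<tau> x\<close> amounts to substituting \<open>\<tau>\<close>, so truth of \<open>\<phi>\<close> becomes provability of \<open>\<phi>[\<tau>]\<close>.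
  Since provable formulas stay provable under Sub, the canonical assignment is generic, and
  Sub followed by Cut shows that every sequent of the theory holds.\<close>

lemma some_in_quotient_class:
  assumes "equiv A r" and "X \<in> A // r"
  shows "(SOME x. x \<in> X) \<in> A \<and> r `` {SOME x. x \<in> X} = X"
proof -
  from assms(2) obtain a where a: "a \<in> A" "X = r `` {a}" by (rule quotientE)
  have "a \<in> X" using a equiv_class_self[OF assms(1)] by simp
  then have "(SOME x. x \<in> X) \<in> X" by (rule someI)
  then show ?thesis
    using a assms by (metis Image_singleton_iff equiv_class_eq in_quotient_imp_subset subsetD)
qed

lemma tsubst_Var: "tsubst Var t = t"
  by (induction t) (auto intro: map_idI)

lemma fsubst_Var: "fsubst Var \<phi> = \<phi>"
  by (cases \<phi>) (auto simp: tsubst_Var)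

lemma tsubst_in_term_set:
  "t \<in> term_set Ops ar Cs Xs \<Longrightarrow> \<forall>x\<in>Xs. \<sigma> x \<in> term_set Ops ar Cs Xs
    \<Longrightarrow> tsubst \<sigma> t \<in> term_set Ops ar Cs Xs"
  by (induction t rule: term_set.induct) (auto intro!: term_set.intros)

context
  fixes Ops :: "'o set" and ar :: "'o \<Rightarrow> nat" and Cs :: "'c set" and Xs :: "'v set"
    and \<Lambda> :: "('v, 'o, 'c, 'h::complete_lattice) sequent set"
begin

lemma equiv_prov_eq: "equiv (term_set Ops ar Cs Xs) (prov_eq Ops ar Cs Xs \<Lambda>)"
  unfolding equiv_def refl_on_def sym_def trans_def prov_eq_def provable_def
  by (auto intro: deriv.Refl deriv.Sym deriv.Trans)

lemma provable_fsubst: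
  assumes "provable Ops ar Cs Xs \<Lambda> \<phi>" and "\<forall>x\<in>Xs. \<tau> x \<in> term_set Ops ar Cs Xs"
  shows "provable Ops ar Cs Xs \<Lambda> (fsubst \<tau> \<phi>)"
  using deriv.Sub[of "{}" \<phi>, OF assms[unfolded provable_def]] by (simp add: provable_def)

lemma le_Sup_provable_Mem_iff:
  assumes "t \<in> term_set Ops ar Cs Xs"
  shows "l \<le> Sup {l. provable Ops ar Cs Xs \<Lambda> (Mem l t)} \<longleftrightarrow> provable Ops ar Cs Xs \<Lambda> (Mem l t)"
    (is "l \<le> ?m \<longleftrightarrow> ?P l")
proof
  assume "l \<le> ?m"
  have "?P ?m"
    unfolding provable_def by (rule deriv.Sup) (auto simp: assms provable_def)
  then have "?P (inf ?m l)"
    unfolding provable_def by (rule deriv.Mon)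
  then show "?P l" using \<open>l \<le> ?m\<close> by (simp add: inf_absorb2)
qed (simp add: Sup_upper)

lemma provable_Mem_cong:
  assumes "provable Ops ar Cs Xs \<Lambda> (Eqn t s)"
  shows "provable Ops ar Cs Xs \<Lambda> (Mem l t) \<longleftrightarrow> provable Ops ar Cs Xs \<Lambda> (Mem l s)"
  using assms deriv.Sym[of "{}" t s] unfolding provable_def by (meson deriv.Fun)

lemma carrier_term_alg:
  "carrier (term_alg Ops ar Cs Xs \<Lambda>) = term_set Ops ar Cs Xs // prov_eq Ops ar Cs Xs \<Lambda>"
  unfolding term_alg_def Let_def by simp

lemma mu_term_alg:
  "mu (term_alg Ops ar Cs Xs \<Lambda>) A = Sup {l. provable Ops ar Cs Xs \<Lambda> (Mem l (SOME t. t \<in> A))}"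
  unfolding term_alg_def Let_def by simp

lemma ops_term_alg:
  "ops (term_alg Ops ar Cs Xs \<Lambda>) f As
     = prov_eq Ops ar Cs Xs \<Lambda> `` {App f (map (\<lambda>A. SOME t. t \<in> A) As)}"
  unfolding term_alg_def Let_def by simp

lemma csts_term_alg: "csts (term_alg Ops ar Cs Xs \<Lambda>) c = prov_eq Ops ar Cs Xs \<Lambda> `` {Cst c}"
  unfolding term_alg_def Let_def by simp

lemma mu_term_alg_class:
  assumes "t \<in> term_set Ops ar Cs Xs"
  shows "mu (term_alg Ops ar Cs Xs \<Lambda>) (prov_eq Ops ar Cs Xs \<Lambda> `` {t})
           = Sup {l. provable Ops ar Cs Xs \<Lambda> (Mem l t)}"
proof -
  let ?R = "prov_eq Ops ar Cs Xs \<Lambda>"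
  define s where "s = (SOME s. s \<in> ?R `` {t})"
  have "s \<in> term_set Ops ar Cs Xs" and "?R `` {s} = ?R `` {t}"
    using some_in_quotient_class[OF equiv_prov_eq quotientI[OF assms]] by (simp_all add: s_def)
  then have "(t, s) \<in> ?R"
    using eq_equiv_class_iff[OF equiv_prov_eq] assms by blast
  then have "provable Ops ar Cs Xs \<Lambda> (Mem l s) \<longleftrightarrow> provable Ops ar Cs Xs \<Lambda> (Mem l t)" for l
    using provable_Mem_cong by (auto simp: prov_eq_def)
  then show ?thesis by (simp add: mu_term_alg s_def)
qed

lemma ops_term_alg_classes:
  assumes f: "f \<in> Ops" and len: "length ts = ar f" and ts: "set ts \<subseteq> term_set Ops ar Cs Xs"
  shows "ops (term_alg Ops ar Cs Xs \<Lambda>) f (map (\<lambda>t. prov_eq Ops ar Cs Xs \<Lambda> `` {t}) ts)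
         = prov_eq Ops ar Cs Xs \<Lambda> `` {App f ts}"
proof -
  let ?R = "prov_eq Ops ar Cs Xs \<Lambda>"
  define ss where "ss = map (\<lambda>t. SOME s. s \<in> ?R `` {t}) ts"
  have rep: "ss ! i \<in> term_set Ops ar Cs Xs \<and> (ts ! i, ss ! i) \<in> ?R" if "i < ar f" for i
  proof -
    have t: "ts ! i \<in> term_set Ops ar Cs Xs" using that ts len by (metis nth_mem subsetD)
    show ?thesis
      using some_in_quotient_class[OF equiv_prov_eq quotientI[OF t]] t that len
        eq_equiv_class_iff[OF equiv_prov_eq] by (auto simp: ss_def)
  qed
  have lss: "length ss = ar f" using len by (simp add: ss_def)
  have "({}, Eqn (App f ts) (App f ss)) \<in> deriv Ops ar Cs Xs \<Lambda>"
    by (rule deriv.Cong[where ar=ar and f=f and ts=ts and ss=ss, OF f len lss])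
      (use rep in \<open>simp add: prov_eq_def provable_def\<close>)
  moreover have "App f ts \<in> term_set Ops ar Cs Xs" using f len ts by (auto intro: term_set.app)
  moreover have "App f ss \<in> term_set Ops ar Cs Xs"
    using f lss rep by (auto intro!: term_set.app simp: in_set_conv_nth)
  ultimately have "(App f ss, App f ts) \<in> ?R"
    by (simp add: prov_eq_def provable_def deriv.Sym)
  then have "?R `` {App f ss} = ?R `` {App f ts}"
    using equiv_prov_eq by (rule equiv_class_eq[rotated])
  then show ?thesis by (simp add: ops_term_alg ss_def comp_def)
qed

lemma is_salg_term_alg: "is_salg Ops ar Cs (term_alg Ops ar Cs Xs \<Lambda>)"
  unfolding is_salg_def
proof (intro conjI ballI allI impI)
  fix c assume "c \<in> Cs"
  then show "csts (term_alg Ops ar Cs Xs \<Lambda>) c \<in> carrier (term_alg Ops ar Cs Xs \<Lambda>)"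
    by (auto simp: csts_term_alg carrier_term_alg intro!: quotientI term_set.cst)
next
  fix f as
  assume f: "f \<in> Ops" and as: "length as = ar f \<and> set as \<subseteq> carrier (term_alg Ops ar Cs Xs \<Lambda>)"
  let ?TA = "term_alg Ops ar Cs Xs \<Lambda>" and ?R = "prov_eq Ops ar Cs Xs \<Lambda>"
  define reps where "reps = map (\<lambda>A. SOME t. t \<in> A) as"
  have len: "length reps = ar f" using as by (simp add: reps_def)
  have reps: "reps ! i \<in> term_set Ops ar Cs Xs \<and> ?R `` {reps ! i} = as ! i" if "i < ar f" for i
  proof -
    have "as ! i \<in> term_set Ops ar Cs Xs // ?R"
      using as that by (auto simp: carrier_term_alg)
    then show ?thesis
      using some_in_quotient_class[OF equiv_prov_eq] as that by (simp add: reps_def)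
  qed
  then have as_reps: "as = map (\<lambda>t. ?R `` {t}) reps"
    using as len by (auto intro: nth_equalityI)
  have reps_in: "set reps \<subseteq> term_set Ops ar Cs Xs"
    using reps len by (auto simp: in_set_conv_nth)
  have app: "App f reps \<in> term_set Ops ar Cs Xs" using f len reps_in by (auto intro: term_set.app)
  have ops: "ops ?TA f as = ?R `` {App f reps}"
    using ops_term_alg_classes[OF f len reps_in] as_reps by simp
  then show "ops ?TA f as \<in> carrier ?TA"
    using app by (simp add: carrier_term_alg quotientI)
  define ls where "ls = map (mu ?TA) as"
  have "provable Ops ar Cs Xs \<Lambda> (Mem (ls ! i) (reps ! i))" if "i < ar f" for i
  proof -
    have "ls ! i = Sup {l. provable Ops ar Cs Xs \<Lambda> (Mem l (reps ! i))}"
      using mu_term_alg_class[of "reps ! i"] reps[OF that] as that by (simp add: ls_def)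
    then show ?thesis
      using le_Sup_provable_Mem_iff[of "reps ! i" "ls ! i"] reps[OF that] by simp
  qed
  then have "provable Ops ar Cs Xs \<Lambda> (Mem (Inf (set ls)) (App f reps))"
    unfolding provable_def using as
    by (intro deriv.Exp[where ar=ar and f=f and ts=reps and ls=ls, OF f len]) (auto simp: ls_def)
  then show "Inf (mu ?TA ` set as) \<le> mu ?TA (ops ?TA f as)"
    using ops mu_term_alg_class[OF app] by (simp add: ls_def Sup_upper)
qed

lemma eval_term_alg:
  assumes "t \<in> term_set Ops ar Cs Xs"
    and \<tau>: "\<forall>x\<in>Xs. \<tau> x \<in> term_set Ops ar Cs Xs \<and> prov_eq Ops ar Cs Xs \<Lambda> `` {\<tau> x} = \<iota> x"
  shows "eval (term_alg Ops ar Cs Xs \<Lambda>) \<iota> t = prov_eq Ops ar Cs Xs \<Lambda> `` {tsubst \<tau> t}"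
  using assms(1)
proof (induction t rule: term_set.induct)
  case (var x)
  then show ?case using \<tau> by simp
next
  case (cst c)
  then show ?case by (simp add: csts_term_alg)
next
  case (app f ts)
  have substs: "set (map (tsubst \<tau>) ts) \<subseteq> term_set Ops ar Cs Xs"
    using app.IH \<tau> by (auto intro: tsubst_in_term_set)
  have evals: "map (eval (term_alg Ops ar Cs Xs \<Lambda>) \<iota>) ts
      = map (\<lambda>t. prov_eq Ops ar Cs Xs \<Lambda> `` {t}) (map (tsubst \<tau>) ts)"
    using app.IH by simp
  show ?case
    unfolding eval.simps tsubst.simps evals
    by (rule ops_term_alg_classes[OF app.hyps(1)]) (use app.hyps(2) substs in simp_all)
qed

lemma sat_at_term_alg_iff_provable:
  assumes \<phi>: "\<phi> \<in> fml_set Ops ar Cs Xs"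
    and \<tau>: "\<forall>x\<in>Xs. \<tau> x \<in> term_set Ops ar Cs Xs \<and> prov_eq Ops ar Cs Xs \<Lambda> `` {\<tau> x} = \<iota> x"
  shows "sat_at (term_alg Ops ar Cs Xs \<Lambda>) \<iota> \<phi> \<longleftrightarrow> provable Ops ar Cs Xs \<Lambda> (fsubst \<tau> \<phi>)"
proof -
  have subst_in: "tsubst \<tau> t \<in> term_set Ops ar Cs Xs" if "t \<in> term_set Ops ar Cs Xs" for t
    using tsubst_in_term_set that \<tau> by blast
  from \<phi> consider (Eqn) s t where "\<phi> = Eqn s t" "s \<in> term_set Ops ar Cs Xs" "t \<in> term_set Ops ar Cs Xs"
    | (Mem) l t where "\<phi> = Mem l t" "t \<in> term_set Ops ar Cs Xs"
    unfolding fml_set_def by blast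
  then show ?thesis
  proof cases
    case Eqn
    then show ?thesis
      using eval_term_alg[OF _ \<tau>] subst_in eq_equiv_class_iff[OF equiv_prov_eq]
      by (auto simp: prov_eq_def)
  next
    case Mem
    then show ?thesis
      using eval_term_alg[OF _ \<tau>] subst_in mu_term_alg_class le_Sup_provable_Mem_iff by simp
  qed
qed

lemma assignment_term_alg_representatives:
  assumes "assignment Xs (term_alg Ops ar Cs Xs \<Lambda>) \<iota>"
  obtains \<tau> where "\<forall>x\<in>Xs. \<tau> x \<in> term_set Ops ar Cs Xs \<and> prov_eq Ops ar Cs Xs \<Lambda> `` {\<tau> x} = \<iota> x"
proof
  show "\<forall>x\<in>Xs. (SOME t. t \<in> \<iota> x) \<in> term_set Ops ar Cs Xs
      \<and> prov_eq Ops ar Cs Xs \<Lambda> `` {SOME t. t \<in> \<iota> x} = \<iota> x"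
    using assms some_in_quotient_class[OF equiv_prov_eq]
    unfolding assignment_def carrier_term_alg by simp
qed

lemma assignment_iota_can: "assignment Xs (term_alg Ops ar Cs Xs \<Lambda>) (iota_can Ops ar Cs Xs \<Lambda>)"
  by (auto simp: assignment_def carrier_term_alg iota_can_def intro!: quotientI term_set.var)

lemma sat_at_iota_can_iff_provable:
  "\<phi> \<in> fml_set Ops ar Cs Xs
    \<Longrightarrow> sat_at (term_alg Ops ar Cs Xs \<Lambda>) (iota_can Ops ar Cs Xs \<Lambda>) \<phi> \<longleftrightarrow> provable Ops ar Cs Xs \<Lambda> \<phi>"
  using sat_at_term_alg_iff_provable[of \<phi> Var]
  by (simp add: fsubst_Var iota_can_def term_set.var)

lemma valid_term_alg_iff_provable:
  assumes "\<phi> \<in> fml_set Ops ar Cs Xs"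
  shows "valid Xs (term_alg Ops ar Cs Xs \<Lambda>) \<phi> \<longleftrightarrow> provable Ops ar Cs Xs \<Lambda> \<phi>"
proof
  assume "valid Xs (term_alg Ops ar Cs Xs \<Lambda>) \<phi>"
  then show "provable Ops ar Cs Xs \<Lambda> \<phi>"
    using assignment_iota_can sat_at_iota_can_iff_provable[OF assms] by (simp add: valid_def)
next
  assume "provable Ops ar Cs Xs \<Lambda> \<phi>"
  then show "valid Xs (term_alg Ops ar Cs Xs \<Lambda>) \<phi>"
    unfolding valid_def
    by (metis assignment_term_alg_representatives sat_at_term_alg_iff_provable[OF assms]
        provable_fsubst)
qed

lemma sat_at_term_alg_iff_provable_section:
  assumes "assignment Xs (term_alg Ops ar Cs Xs \<Lambda>) \<iota>"
    and "\<forall>A\<in>term_set Ops ar Cs Xs // prov_eq Ops ar Cs Xs \<Lambda>.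
           \<sigma> A \<in> term_set Ops ar Cs Xs \<and> prov_eq Ops ar Cs Xs \<Lambda> `` {\<sigma> A} = A"
    and "\<phi> \<in> fml_set Ops ar Cs Xs"
  shows "sat_at (term_alg Ops ar Cs Xs \<Lambda>) \<iota> \<phi> \<longleftrightarrow> provable Ops ar Cs Xs \<Lambda> (fsubst (\<sigma> \<circ> \<iota>) \<phi>)"
  using assms sat_at_term_alg_iff_provable[of \<phi> "\<sigma> \<circ> \<iota>" \<iota>]
  by (simp add: assignment_def carrier_term_alg)

lemma is_model_term_alg:
  assumes "fuzzy_theory Ops ar Cs Xs \<Lambda>"
  shows "is_model Xs (term_alg Ops ar Cs Xs \<Lambda>) \<Lambda>"
  unfolding is_model_def sat_seq_def
proof (intro ballI allI impI)
  fix s \<iota>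
  assume s: "s \<in> \<Lambda>" and \<iota>: "assignment Xs (term_alg Ops ar Cs Xs \<Lambda>) \<iota>"
    and \<Gamma>_holds: "\<forall>\<phi>\<in>fst s. sat_at (term_alg Ops ar Cs Xs \<Lambda>) \<iota> \<phi>"
  obtain \<Gamma> \<psi> where s_eq: "s = (\<Gamma>, \<psi>)" by (cases s)
  have \<Gamma>: "\<Gamma> \<subseteq> fml_set Ops ar Cs Xs" and \<psi>: "\<psi> \<in> fml_set Ops ar Cs Xs"
    using assms s s_eq unfolding fuzzy_theory_def by auto
  obtain \<tau> where \<tau>: "\<forall>x\<in>Xs. \<tau> x \<in> term_set Ops ar Cs Xs \<and> prov_eq Ops ar Cs Xs \<Lambda> `` {\<tau> x} = \<iota> x"
    using assignment_term_alg_representatives[OF \<iota>] .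
  have "(fsubst \<tau> ` \<Gamma>, fsubst \<tau> \<psi>) \<in> deriv Ops ar Cs Xs \<Lambda>"
    using \<tau> s s_eq by (intro deriv.Sub) (auto intro: deriv.Thy)
  moreover have "\<forall>\<phi>\<in>fsubst \<tau> ` \<Gamma>. ({}, \<phi>) \<in> deriv Ops ar Cs Xs \<Lambda>"
    using \<Gamma>_holds \<Gamma> sat_at_term_alg_iff_provable[OF _ \<tau>] s_eq
    by (auto simp: provable_def)
  ultimately have "provable Ops ar Cs Xs \<Lambda> (fsubst \<tau> \<psi>)"
    unfolding provable_def by (blast intro: deriv.Cut)
  then show "sat_at (term_alg Ops ar Cs Xs \<Lambda>) \<iota> (snd s)"
    using sat_at_term_alg_iff_provable[OF \<psi> \<tau>] s_eq by simp
qed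

end

theorem lemma25:
  fixes Ops :: "'o set" and ar :: "'o \<Rightarrow> nat" and Cs :: "'c set" and Xs :: "'v set"
    and \<Lambda> :: "('v, 'o, 'c, 'h::complete_lattice) sequent set"
  assumes frame: "frame_law TYPE('h)"
    and arity: "\<forall>f\<in>Ops. ar f \<ge> 1"
    and thy: "fuzzy_theory Ops ar Cs Xs \<Lambda>"
  defines "T \<equiv> term_set Ops ar Cs Xs"
    and "F \<equiv> (fml_set Ops ar Cs Xs :: ('v, 'o, 'c, 'h) fml set)"
    and "R \<equiv> prov_eq Ops ar Cs Xs \<Lambda>"
    and "TA \<equiv> term_alg Ops ar Cs Xs \<Lambda>"
    and "ic \<equiv> iota_can Ops ar Cs Xs \<Lambda>"
    and "prov \<equiv> provable Ops ar Cs Xs \<Lambda>"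
  shows "equiv T R
    \<and> (\<forall>t\<in>T. mu TA (R `` {t}) = Sup {l. prov (Mem l t)})
    \<and> (\<forall>f\<in>Ops. \<forall>ts. length ts = ar f \<and> set ts \<subseteq> T \<longrightarrow>
          ops TA f (map (\<lambda>t. R `` {t}) ts) = R `` {App f ts})
    \<and> (\<forall>c\<in>Cs. csts TA c = R `` {Cst c})
    \<and> is_salg Ops ar Cs TA
    \<and> (\<forall>\<phi>\<in>F. (valid Xs TA \<phi> \<longleftrightarrow> sat_at TA ic \<phi>) \<and> (sat_at TA ic \<phi> \<longleftrightarrow> prov \<phi>))
    \<and> (\<forall>\<iota> \<sigma>. assignment Xs TA \<iota> \<longrightarrow>
          (\<forall>A\<in>T // R. \<sigma> A \<in> T \<and> R `` {\<sigma> A} = A) \<longrightarrow>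
          (\<forall>\<phi>\<in>F. sat_at TA \<iota> \<phi> \<longleftrightarrow> prov (fsubst (\<sigma> \<circ> \<iota>) \<phi>)))
    \<and> is_model Xs TA \<Lambda>"
  unfolding T_def F_def R_def TA_def ic_def prov_def
  by (intro conjI ballI allI impI)
    (simp_all add: equiv_prov_eq mu_term_alg_class ops_term_alg_classes csts_term_alg
      is_salg_term_alg valid_term_alg_iff_provable sat_at_iota_can_iff_provable
      sat_at_term_alg_iff_provable_section is_model_term_alg[OF thy])

end
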